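(* Let $(c,\alpha,\beta,\phi)$ be a solution of the Rayleigh–Kuo equation $-\phi''+\alpha^{2}\phi-\frac{\beta-U''}{U-c}\phi=0$ on $(y_1,y_2)$ with $\phi(y_1)=\phi(y_2)=0$, where $\phi\in H^{2}(y_1,y_2)$. Then (i) $\langle L_{\alpha}\omega,\omega\rangle=(c-U_{\beta})\int_{y_{1}}^{y_{2}}\frac{\beta-U''}{|U-c|^{2}}|\phi|^{2}\,dy$, where $\omega=-\phi''+\alpha^{2}\phi$. (ii) If $(c,\alpha,\beta,\phi)$ is an unstable mode (i.e. $\operatorname{Im}c>0$), then $\langle L_{\alpha}\omega,\omega\rangle=0$. (iii) If $(c,\alpha,\beta,\phi)$ is a regular or non-resonant neutral limiting mode, then $\langle L_{\alpha}\omega,\omega\rangle=0$. If $(c,\alpha,\beta,\phi)$ is a singular neutral limiting mode, then $\langle L_{\alpha}\omega,\omega\rangle\leq 0$.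
   Context: Let $U\in C^{3}([y_1,y_2])$ be a non-constant shear flow in class $\mathcal{K}^{+}$: for each $\beta$ in the range of $U''$ there is $U_\beta$ in the range of $U$ such that $K_\beta(y)=\frac{\beta-U''(y)}{U(y)-U_\beta}$ is positive and bounded on $[y_1,y_2]$. Fix $\beta\in(\min U'',\max U'')$ and $\alpha>0$. On $Y=L^{2}_{1/K_\beta}(y_1,y_2)$ define the self-adjoint operator $L_{\alpha}=\frac{1}{K_{\beta}}-\left(-\frac{d^{2}}{dy^{2}}+\alpha^{2}\right)^{-1}$ (inverse taken with Dirichlet boundary conditions at $y_1,y_2$), so that $\langle L_\alpha\omega,\omega\rangle=\int_{y_1}^{y_2}\left(\frac{\omega}{K_\beta}-\psi\right)\bar\omega\,dy$ with $\psi=(-\frac{d^2}{dy^2}+\alpha^2)^{-1}\omega$. A neutral limiting mode $(c_s,\alpha_s,\beta,\phi_s)$ is one with $c_s\in\mathbb{R}$, $\alpha_s>0$, obtained as a limit of unstable modes $(c_k,\alpha_k,\beta,\phi_k)$ ($\operatorname{Im}c_k>0$, $\|\phi_k\|_{L^2}=1$) with $c_k\to c_s$, $\alpha_k\to\alpha_s$, $\phi_k\to\phi_s$ uniformly on compact subsets of $[y_1,y_2]\setminus\{U=c_s\}$, and $\phi_s$ solving $(U-c_s)(-\phi_s''+\alpha_s^2\phi_s)-(\beta-U'')\phi_s=0$ there. A neutral mode is called regular if $c=U_\beta$, singular if $c=U(y_1)$, $c=U(y_2)$, or $c$ is a critical value of $U$, and non-resonant if $c$ is outside the range of $U$. *)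

theory Defs
  imports "HOL-Analysis.Analysis"
begin

definition C3_on :: "real \<Rightarrow> real \<Rightarrow> (real \<Rightarrow> real) \<Rightarrow> (real \<Rightarrow> real) \<Rightarrow> (real \<Rightarrow> real) \<Rightarrow> (real \<Rightarrow> real) \<Rightarrow> bool" where
  "C3_on y1 y2 U U1 U2 U3 \<longleftrightarrow> y1 < y2 \<and>
     (\<forall>y\<in>{y1..y2}. (U has_real_derivative U1 y) (at y within {y1..y2}) \<and>
                   (U1 has_real_derivative U2 y) (at y within {y1..y2}) \<and>
                   (U2 has_real_derivative U3 y) (at y within {y1..y2})) \<and>
     continuous_on {y1..y2} U3"

definition Kuo_K :: "(real \<Rightarrow> real) \<Rightarrow> (real \<Rightarrow> real) \<Rightarrow> real \<Rightarrow> real \<Rightarrow> real \<Rightarrow> real \<Rightarrow> (real \<Rightarrow> real) \<Rightarrow> bool" where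
  "Kuo_K U U2 y1 y2 \<beta> Ub K \<longleftrightarrow> Ub \<in> U ` {y1..y2} \<and>
     (\<forall>y\<in>{y1..y2}. 0 < K y \<and> K y * (U y - Ub) = \<beta> - U2 y) \<and> bounded (K ` {y1..y2})"

definition classKplus :: "(real \<Rightarrow> real) \<Rightarrow> (real \<Rightarrow> real) \<Rightarrow> real \<Rightarrow> real \<Rightarrow> bool" where
  "classKplus U U2 y1 y2 \<longleftrightarrow> (\<forall>\<beta>\<in>U2 ` {y1..y2}. \<exists>Ub K. Kuo_K U U2 y1 y2 \<beta> Ub K)"

text \<open>f in H^2(a,b): f, f1 absolutely continuous with f1 = f', f2 = f'' (a.e.) and f2 in L^2(a,b).\<close>
definition H2_on :: "real \<Rightarrow> real \<Rightarrow> (real \<Rightarrow> complex) \<Rightarrow> (real \<Rightarrow> complex) \<Rightarrow> (real \<Rightarrow> complex) \<Rightarrow> bool" where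
  "H2_on a b f f1 f2 \<longleftrightarrow>
     set_borel_measurable lborel {a..b} f2 \<and>
     set_integrable lborel {a..b} (\<lambda>y. (cmod (f2 y))\<^sup>2) \<and>
     (\<forall>x\<in>{a..b}. f1 x = f1 a + (LINT t:{a..x}|lborel. f2 t)) \<and>
     (\<forall>x\<in>{a..b}. f x = f a + (LINT t:{a..x}|lborel. f1 t))"

definition rk_solution :: "(real \<Rightarrow> real) \<Rightarrow> (real \<Rightarrow> real) \<Rightarrow> real \<Rightarrow> real \<Rightarrow> complex \<Rightarrow> real \<Rightarrow> real
    \<Rightarrow> (real \<Rightarrow> complex) \<Rightarrow> (real \<Rightarrow> complex) \<Rightarrow> (real \<Rightarrow> complex) \<Rightarrow> bool" where
  "rk_solution U U2 y1 y2 c \<alpha> \<beta> \<phi> \<phi>1 \<phi>2 \<longleftrightarrow>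
     H2_on y1 y2 \<phi> \<phi>1 \<phi>2 \<and> \<phi> y1 = 0 \<and> \<phi> y2 = 0 \<and>
     (AE y in lborel. y \<in> {y1<..<y2} \<longrightarrow>
        - \<phi>2 y + of_real (\<alpha>\<^sup>2) * \<phi> y - of_real (\<beta> - U2 y) / (of_real (U y) - c) * \<phi> y = 0)"

definition vorticity :: "real \<Rightarrow> (real \<Rightarrow> complex) \<Rightarrow> (real \<Rightarrow> complex) \<Rightarrow> real \<Rightarrow> complex" where
  "vorticity \<alpha> \<phi> \<phi>2 = (\<lambda>y. - \<phi>2 y + of_real (\<alpha>\<^sup>2) * \<phi> y)"

text \<open>psi = (-d^2/dy^2 + alpha^2)^{-1} omega with Dirichlet boundary conditions
  (the unique H^2 solution, normalised to 0 outside [a,b]).\<close>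
definition dirichlet_inv :: "real \<Rightarrow> real \<Rightarrow> real \<Rightarrow> (real \<Rightarrow> complex) \<Rightarrow> real \<Rightarrow> complex" where
  "dirichlet_inv a b \<alpha> \<omega> = (THE \<psi>.
     (\<exists>\<psi>1 \<psi>2. H2_on a b \<psi> \<psi>1 \<psi>2 \<and> \<psi> a = 0 \<and> \<psi> b = 0 \<and>
        (AE y in lborel. y \<in> {a..b} \<longrightarrow> - \<psi>2 y + of_real (\<alpha>\<^sup>2) * \<psi> y = \<omega> y)) \<and>
     (\<forall>y. y \<notin> {a..b} \<longrightarrow> \<psi> y = 0))"

definition L_form :: "real \<Rightarrow> real \<Rightarrow> (real \<Rightarrow> real) \<Rightarrow> real \<Rightarrow> (real \<Rightarrow> complex) \<Rightarrow> complex" where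
  "L_form y1 y2 K \<alpha> \<omega> =
     (LINT y:{y1..y2}|lborel. (\<omega> y / of_real (K y) - dirichlet_inv y1 y2 \<alpha> \<omega> y) * cnj (\<omega> y))"

definition unstable_mode :: "(real \<Rightarrow> real) \<Rightarrow> (real \<Rightarrow> real) \<Rightarrow> real \<Rightarrow> real \<Rightarrow> complex \<Rightarrow> real \<Rightarrow> real
    \<Rightarrow> (real \<Rightarrow> complex) \<Rightarrow> bool" where
  "unstable_mode U U2 y1 y2 c \<alpha> \<beta> \<phi> \<longleftrightarrow> 0 < Im c \<and> 0 < \<alpha> \<and>
     (\<exists>\<phi>1 \<phi>2. rk_solution U U2 y1 y2 c \<alpha> \<beta> \<phi> \<phi>1 \<phi>2)"

definition neutral_limiting_mode :: "(real \<Rightarrow> real) \<Rightarrow> (real \<Rightarrow> real) \<Rightarrow> real \<Rightarrow> real \<Rightarrow> complex \<Rightarrow> real \<Rightarrow> real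
    \<Rightarrow> (real \<Rightarrow> complex) \<Rightarrow> bool" where
  "neutral_limiting_mode U U2 y1 y2 c \<alpha> \<beta> \<phi> \<longleftrightarrow> Im c = 0 \<and> 0 < \<alpha> \<and>
     (\<exists>ck \<alpha>k \<phi>k.
        (\<forall>k. unstable_mode U U2 y1 y2 (ck k) (\<alpha>k k) \<beta> (\<phi>k k) \<and>
             (LINT y:{y1..y2}|lborel. (cmod (\<phi>k k y))\<^sup>2) = 1) \<and>
        ck \<longlonglongrightarrow> c \<and> \<alpha>k \<longlonglongrightarrow> \<alpha> \<and>
        (\<forall>S. compact S \<and> S \<subseteq> {y1..y2} - {y. of_real (U y) = c} \<longrightarrow>
             uniform_limit S \<phi>k \<phi> sequentially)) \<and>
     (\<exists>\<phi>1 \<phi>2. \<forall>y\<in>{y1..y2} - {y. of_real (U y) = c}.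
        (\<phi> has_vector_derivative \<phi>1 y) (at y within {y1..y2}) \<and>
        (\<phi>1 has_vector_derivative \<phi>2 y) (at y within {y1..y2}) \<and>
        (of_real (U y) - c) * (- \<phi>2 y + of_real (\<alpha>\<^sup>2) * \<phi> y) - of_real (\<beta> - U2 y) * \<phi> y = 0)"

definition regular_mode :: "complex \<Rightarrow> real \<Rightarrow> bool" where
  "regular_mode c Ub \<longleftrightarrow> c = of_real Ub"

definition singular_mode :: "(real \<Rightarrow> real) \<Rightarrow> (real \<Rightarrow> real) \<Rightarrow> real \<Rightarrow> real \<Rightarrow> complex \<Rightarrow> bool" where
  "singular_mode U U1 y1 y2 c \<longleftrightarrow> c = of_real (U y1) \<or> c = of_real (U y2) \<or>
     (\<exists>y\<in>{y1..y2}. U1 y = 0 \<and> c = of_real (U y))"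

definition nonresonant_mode :: "(real \<Rightarrow> real) \<Rightarrow> real \<Rightarrow> real \<Rightarrow> complex \<Rightarrow> bool" where
  "nonresonant_mode U y1 y2 c \<longleftrightarrow> c \<notin> of_real ` U ` {y1..y2}"

end

(* The Rayleigh-Kuo equation gives omega = (beta - U'') phi / (U - c) = K (U - U_beta) phi / (U - c)
   almost everywhere, and uniqueness for the Dirichlet problem of -d^2/dy^2 + alpha^2 gives psi = phi.
   Hence omega / K - psi = (c - U_beta) phi / (U - c) pointwise, which is (i). For an unstable mode
   the imaginary part of the energy identity makes the integral in (i) vanish, which is (ii).
   A neutral limiting mode inherits this from the unstable modes approximating it: completely
   when U stays away from c (dominated convergence), and otherwise as a sign, because the weight
   (c - U_beta)(beta - U'') = (c - U_beta) K (U - U_beta) is nonnegative near the critical layer. *)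

theory Submission
  imports Defs
begin

section \<open>H^2 functions and the Dirichlet problem\<close>

lemma continuous_on_if_has_vector_derivative:
  fixes f :: "real \<Rightarrow> 'a::real_normed_vector"
  assumes "\<forall>x\<in>S. (f has_vector_derivative f' x) (at x within S)"
  shows "continuous_on S f"
  unfolding continuous_on_eq_continuous_within
  using assms has_vector_derivative_continuous by blast

lemma borel_measurable_continuous_on_restrict_lborel:
  fixes f :: "real \<Rightarrow> 'b::real_normed_vector"
  assumes "continuous_on A f"
  shows "f \<in> borel_measurable (restrict_space lborel A)"
proof -
  have "f \<in> borel_measurable (restrict_space borel A)"
    by (rule borel_measurable_continuous_on_restrict[OF assms])
  moreover have "sets (restrict_space lborel A) = sets (restrict_space borel A)"
    by (simp add: sets_restrict_space)
  ultimately show ?thesis using measurable_cong_sets[OF _ refl] by blast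
qed

lemma set_borel_measurable_iff_restrict:
  fixes f :: "real \<Rightarrow> 'b::real_normed_vector"
  assumes "A \<in> sets borel"
  shows "set_borel_measurable lborel A f \<longleftrightarrow> f \<in> borel_measurable (restrict_space lborel A)"
  using assms by (simp add: set_borel_measurable_def borel_measurable_restrict_space_iff)

lemma set_lebesgue_integral_cong_AE_restrict:
  fixes f g :: "real \<Rightarrow> 'b::{banach,second_countable_topology}"
  assumes A: "A \<in> sets borel" and f: "f \<in> borel_measurable (restrict_space lborel A)"
    and g: "g \<in> borel_measurable (restrict_space lborel A)"
    and ae: "AE x in lborel. x \<in> A \<longrightarrow> f x = g x"
  shows "(LINT x:A|lborel. f x) = (LINT x:A|lborel. g x)"
  unfolding set_lebesgue_integral_def
proof (rule integral_cong_AE)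
  show "(\<lambda>x. indicator A x *\<^sub>R f x) \<in> borel_measurable lborel"
    using f A by (simp add: borel_measurable_restrict_space_iff)
  show "(\<lambda>x. indicator A x *\<^sub>R g x) \<in> borel_measurable lborel"
    using g A by (simp add: borel_measurable_restrict_space_iff)
  show "AE x in lborel. indicator A x *\<^sub>R f x = indicator A x *\<^sub>R g x"
    using ae by eventually_elim (simp split: split_indicator)
qed

lemma set_integrable_Icc_if_square_integrable:
  fixes f :: "real \<Rightarrow> complex"
  assumes m: "set_borel_measurable lborel {a..b} f"
    and sq: "set_integrable lborel {a..b} (\<lambda>y. (cmod (f y))\<^sup>2)"
  shows "set_integrable lborel {a..b} f"
proof (rule set_integrable_bound[OF _ m])
  have "set_integrable lborel {a..b} (\<lambda>_. 1::real)"
    unfolding set_integrable_def by (rule borel_integrable_compact) (auto intro: continuous_intros)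
  from Bochner_Integration.integrable_add[OF this[unfolded set_integrable_def] sq[unfolded set_integrable_def]]
  show "set_integrable lborel {a..b} (\<lambda>y. 1 + (cmod (f y))\<^sup>2)"
    unfolding set_integrable_def by (simp add: distrib_left)
  show "AE x in lborel. x \<in> {a..b} \<longrightarrow> norm (f x) \<le> norm (1 + (cmod (f x))\<^sup>2)"
  proof (rule AE_I2, rule impI)
    fix x
    have "0 \<le> (cmod (f x) - 1)\<^sup>2" by simp
    then have "2 * cmod (f x) \<le> 1 + (cmod (f x))\<^sup>2" by (simp add: power2_diff)
    then have "cmod (f x) \<le> 1 + (cmod (f x))\<^sup>2"
      using norm_ge_zero[of "f x"] by linarith
    then show "norm (f x) \<le> norm (1 + (cmod (f x))\<^sup>2)" by simp
  qed
qed

lemma has_vector_derivative_if_integral_rep: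
  fixes f f1 :: "real \<Rightarrow> complex"
  assumes c1: "continuous_on {a..b} f1"
    and rep: "\<forall>x\<in>{a..b}. f x = f a + (LINT t:{a..x}|lborel. f1 t)"
  shows "\<forall>x\<in>{a..b}. (f has_vector_derivative f1 x) (at x within {a..b})"
proof
  fix x assume x: "x \<in> {a..b}"
  have eq: "f a + integral {a..u} f1 = f u" if u: "u \<in> {a..b}" for u
  proof -
    have "continuous_on {a..u} f1" by (rule continuous_on_subset[OF c1]) (use u in auto)
    then have "set_integrable lborel {a..u} f1"
      unfolding set_integrable_def by (rule borel_integrable_compact[rotated]) auto
    then have "(LINT t:{a..u}|lborel. f1 t) = integral {a..u} f1"
      by (rule set_borel_integral_eq_integral)
    moreover have "f u = f a + (LINT t:{a..u}|lborel. f1 t)" using rep u by blast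
    ultimately show ?thesis by simp
  qed
  have D: "((\<lambda>u. f a + integral {a..u} f1) has_vector_derivative f1 x) (at x within {a..b})"
    using integral_has_vector_derivative[OF c1 x] by (auto intro!: derivative_eq_intros)
  show "(f has_vector_derivative f1 x) (at x within {a..b})"
    by (rule has_vector_derivative_transform[OF x _ D]) (use eq in auto)
qed

lemma H2_on_regularity:
  fixes f f1 f2 :: "real \<Rightarrow> complex"
  assumes H: "H2_on a b f f1 f2"
  shows "set_integrable lborel {a..b} f2" and "continuous_on {a..b} f1"
    and "\<forall>x\<in>{a..b}. (f has_vector_derivative f1 x) (at x within {a..b})"
    and "continuous_on {a..b} f"
proof -
  show i2: "set_integrable lborel {a..b} f2"
    using H unfolding H2_on_def by (intro set_integrable_Icc_if_square_integrable) auto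
  have eq: "f1 a + integral {a..u} f2 = f1 u" if u: "u \<in> {a..b}" for u
  proof -
    have "set_integrable lborel {a..u} f2"
      by (rule set_integrable_subset[OF i2]) (use u in auto)
    then have "(LINT t:{a..u}|lborel. f2 t) = integral {a..u} f2"
      by (rule set_borel_integral_eq_integral)
    moreover have "f1 u = f1 a + (LINT t:{a..u}|lborel. f2 t)" using H u unfolding H2_on_def by blast
    ultimately show ?thesis by simp
  qed
  have "f2 integrable_on {a..b}" using set_borel_integral_eq_integral(1)[OF i2] .
  then have "continuous_on {a..b} (\<lambda>u. f1 a + integral {a..u} f2)"
    by (intro continuous_on_add continuous_on_const indefinite_integral_continuous_1)
  then show c1: "continuous_on {a..b} f1"
    by (rule continuous_on_eq) (use eq in metis)
  show d: "\<forall>x\<in>{a..b}. (f has_vector_derivative f1 x) (at x within {a..b})"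
    using has_vector_derivative_if_integral_rep[OF c1] H unfolding H2_on_def by blast
  show "continuous_on {a..b} f"
    by (rule continuous_on_if_has_vector_derivative[OF d])
qed

lemma H2_second_derivative_if_AE_continuous:
  fixes f1 f2 g :: "real \<Rightarrow> complex"
  assumes m: "set_borel_measurable lborel {a..b} f2"
    and rep: "\<forall>x\<in>{a..b}. f1 x = f1 a + (LINT t:{a..x}|lborel. f2 t)"
    and cg: "continuous_on {a..b} g"
    and ae: "AE x in lborel. x \<in> {a..b} \<longrightarrow> f2 x = g x"
  shows "\<forall>x\<in>{a..b}. (f1 has_vector_derivative g x) (at x within {a..b})"
proof (rule has_vector_derivative_if_integral_rep[OF cg], intro ballI)
  fix x assume x: "x \<in> {a..b}"
  have m2: "f2 \<in> borel_measurable (restrict_space lborel {a..b})"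
    using m by (simp add: set_borel_measurable_iff_restrict)
  have "(LINT t:{a..x}|lborel. f2 t) = (LINT t:{a..x}|lborel. g t)"
  proof (rule set_lebesgue_integral_cong_AE_restrict)
    show "f2 \<in> borel_measurable (restrict_space lborel {a..x})"
      by (rule measurable_restrict_mono[OF m2]) (use x in auto)
    show "g \<in> borel_measurable (restrict_space lborel {a..x})"
      by (rule borel_measurable_continuous_on_restrict_lborel, rule continuous_on_subset[OF cg])
        (use x in auto)
    show "AE t in lborel. t \<in> {a..x} \<longrightarrow> f2 t = g t"
      using ae by eventually_elim (use x in auto)
  qed auto
  moreover have "f1 x = f1 a + (LINT t:{a..x}|lborel. f2 t)" using rep x by blast
  ultimately show "f1 x = f1 a + (LINT t:{a..x}|lborel. g t)" by simp
qed

lemma dirichlet_integration_by_parts: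
  fixes f f1 g :: "real \<Rightarrow> complex"
  assumes ab: "a \<le> b"
    and d1: "\<forall>x\<in>{a..b}. (f has_vector_derivative f1 x) (at x within {a..b})"
    and d2: "\<forall>x\<in>{a..b}. (f1 has_vector_derivative g x) (at x within {a..b})"
    and fa: "f a = 0" and fb: "f b = 0"
  shows "((\<lambda>x. f1 x * cnj (f1 x) + g x * cnj (f x)) has_integral 0) {a..b}"
proof -
  have D: "\<And>x. x \<in> {a..b} \<Longrightarrow> ((\<lambda>x. f1 x * cnj (f x)) has_vector_derivative
           (f1 x * cnj (f1 x) + g x * cnj (f x))) (at x within {a..b})"
    using has_vector_derivative_mult[OF d2[rule_format] has_vector_derivative_cnj[OF d1[rule_format]]] .
  have "((\<lambda>x. f1 x * cnj (f1 x) + g x * cnj (f x)) has_integral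
          (f1 b * cnj (f b) - f1 a * cnj (f a))) {a..b}"
    by (rule fundamental_theorem_of_calculus[OF ab D])
  then show ?thesis using fa fb by simp
qed

lemma helmholtz_dirichlet_zero:
  fixes f f1 :: "real \<Rightarrow> complex"
  assumes ab: "a < b" and al: "\<alpha> \<noteq> 0"
    and d1: "\<forall>x\<in>{a..b}. (f has_vector_derivative f1 x) (at x within {a..b})"
    and d2: "\<forall>x\<in>{a..b}. (f1 has_vector_derivative (of_real (\<alpha>\<^sup>2) * f x)) (at x within {a..b})"
    and fa: "f a = 0" and fb: "f b = 0"
  shows "\<forall>x\<in>{a..b}. f x = 0"
proof
  define h where "h x = (cmod (f1 x))\<^sup>2 + \<alpha>\<^sup>2 * (cmod (f x))\<^sup>2" for x
  have "((\<lambda>x. f1 x * cnj (f1 x) + of_real (\<alpha>\<^sup>2) * f x * cnj (f x)) has_integral 0) {a..b}"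
    using dirichlet_integration_by_parts[OF less_imp_le[OF ab] d1 d2 fa fb] by (simp only: mult.assoc)
  moreover have "(\<lambda>x. f1 x * cnj (f1 x) + of_real (\<alpha>\<^sup>2) * f x * cnj (f x)) = (\<lambda>x. of_real (h x))"
    by (simp only: h_def of_real_add of_real_mult mult.assoc complex_norm_square)
  ultimately have "((\<lambda>x. complex_of_real (h x)) has_integral 0) {a..b}" by simp
  from has_integral_linear[OF this bounded_linear_Re]
  have H: "(h has_integral 0) (cbox a b)" by (simp add: o_def)
  have ch: "continuous_on (cbox a b) h"
    unfolding h_def cbox_interval
    by (intro continuous_intros continuous_on_if_has_vector_derivative[OF d1]
        continuous_on_if_has_vector_derivative[OF d2])
  fix x assume x: "x \<in> {a..b}"
  have "h x = 0"
  proof (rule has_integral_0_cbox_imp_0[OF ch _ H])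
    show "box a b \<noteq> {}" "x \<in> cbox a b" using ab x by auto
    show "0 \<le> h y" for y by (simp add: h_def)
  qed
  moreover have "0 \<le> (cmod (f1 x))\<^sup>2" "0 \<le> \<alpha>\<^sup>2 * (cmod (f x))\<^sup>2" by simp_all
  ultimately have "\<alpha>\<^sup>2 * (cmod (f x))\<^sup>2 = 0"
    unfolding h_def by linarith
  then show "f x = 0" using al by simp
qed

lemma helmholtz_dirichlet_unique:
  fixes \<phi> \<phi>1 \<phi>2 \<psi> \<psi>1 \<psi>2 :: "real \<Rightarrow> complex"
  assumes ab: "a < b" and al: "\<alpha> \<noteq> 0"
    and H\<phi>: "H2_on a b \<phi> \<phi>1 \<phi>2" and "\<phi> a = 0" and "\<phi> b = 0"
    and H\<psi>: "H2_on a b \<psi> \<psi>1 \<psi>2" and "\<psi> a = 0" and "\<psi> b = 0"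
    and ae: "AE y in lborel. y \<in> {a..b} \<longrightarrow>
               - \<psi>2 y + of_real (\<alpha>\<^sup>2) * \<psi> y = - \<phi>2 y + of_real (\<alpha>\<^sup>2) * \<phi> y"
  shows "\<forall>y\<in>{a..b}. \<psi> y = \<phi> y"
proof -
  have D1: "\<forall>x\<in>{a..b}. ((\<lambda>x. \<psi> x - \<phi> x) has_vector_derivative (\<psi>1 x - \<phi>1 x)) (at x within {a..b})"
    using H2_on_regularity(3)[OF H\<psi>] H2_on_regularity(3)[OF H\<phi>]
    by (auto intro!: derivative_eq_intros)
  have D2: "\<forall>x\<in>{a..b}. ((\<lambda>x. \<psi>1 x - \<phi>1 x) has_vector_derivative
              (of_real (\<alpha>\<^sup>2) * (\<psi> x - \<phi> x))) (at x within {a..b})"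
  proof (rule H2_second_derivative_if_AE_continuous[of a b "\<lambda>x. \<psi>2 x - \<phi>2 x"])
    show "set_borel_measurable lborel {a..b} (\<lambda>x. \<psi>2 x - \<phi>2 x)"
    proof -
      have "\<psi>2 \<in> borel_measurable (restrict_space lborel {a..b})"
        "\<phi>2 \<in> borel_measurable (restrict_space lborel {a..b})"
        using H\<psi> H\<phi> unfolding H2_on_def by (simp_all add: set_borel_measurable_iff_restrict)
      then show ?thesis by (simp add: set_borel_measurable_iff_restrict)
    qed
    show "\<forall>x\<in>{a..b}. \<psi>1 x - \<phi>1 x = \<psi>1 a - \<phi>1 a + (LINT t:{a..x}|lborel. \<psi>2 t - \<phi>2 t)"
    proof
      fix x assume x: "x \<in> {a..b}"
      have "(LINT t:{a..x}|lborel. \<psi>2 t - \<phi>2 t) =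
              (LINT t:{a..x}|lborel. \<psi>2 t) - (LINT t:{a..x}|lborel. \<phi>2 t)"
        by (intro set_integral_diff(2) set_integrable_subset[OF H2_on_regularity(1)[OF H\<psi>]]
            set_integrable_subset[OF H2_on_regularity(1)[OF H\<phi>]]) (use x in auto)
      moreover have "\<psi>1 x = \<psi>1 a + (LINT t:{a..x}|lborel. \<psi>2 t)"
        using H\<psi> x unfolding H2_on_def by blast
      moreover have "\<phi>1 x = \<phi>1 a + (LINT t:{a..x}|lborel. \<phi>2 t)"
        using H\<phi> x unfolding H2_on_def by blast
      ultimately show "\<psi>1 x - \<phi>1 x = \<psi>1 a - \<phi>1 a + (LINT t:{a..x}|lborel. \<psi>2 t - \<phi>2 t)"
        by (simp add: algebra_simps)
    qed
    show "continuous_on {a..b} (\<lambda>x. of_real (\<alpha>\<^sup>2) * (\<psi> x - \<phi> x))"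
      using H2_on_regularity(4)[OF H\<psi>] H2_on_regularity(4)[OF H\<phi>] by (intro continuous_intros)
    show "AE x in lborel. x \<in> {a..b} \<longrightarrow> \<psi>2 x - \<phi>2 x = of_real (\<alpha>\<^sup>2) * (\<psi> x - \<phi> x)"
      using ae by eventually_elim (auto simp: algebra_simps)
  qed
  have "\<forall>x\<in>{a..b}. \<psi> x - \<phi> x = 0"
    by (rule helmholtz_dirichlet_zero[OF ab al D1 D2]) (use assms in auto)
  then show ?thesis by simp
qed

lemma dirichlet_inv_vorticity:
  fixes \<phi> \<phi>1 \<phi>2 :: "real \<Rightarrow> complex"
  assumes ab: "a < b" and al: "\<alpha> \<noteq> 0" and H: "H2_on a b \<phi> \<phi>1 \<phi>2"
    and pa: "\<phi> a = 0" and pb: "\<phi> b = 0"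
  shows "\<forall>y\<in>{a..b}. dirichlet_inv a b \<alpha> (vorticity \<alpha> \<phi> \<phi>2) y = \<phi> y"
proof -
  define \<psi>0 where "\<psi>0 y = (if y \<in> {a..b} then \<phi> y else 0)" for y
  define P where "P \<psi> \<longleftrightarrow> (\<exists>\<psi>1 \<psi>2. H2_on a b \<psi> \<psi>1 \<psi>2 \<and> \<psi> a = 0 \<and> \<psi> b = 0 \<and>
        (AE y in lborel. y \<in> {a..b} \<longrightarrow> - \<psi>2 y + of_real (\<alpha>\<^sup>2) * \<psi> y = vorticity \<alpha> \<phi> \<phi>2 y)) \<and>
     (\<forall>y. y \<notin> {a..b} \<longrightarrow> \<psi> y = 0)" for \<psi>
  have H0: "H2_on a b \<psi>0 \<phi>1 \<phi>2"
  proof -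
    have "\<psi>0 x = \<psi>0 a + (LINT t:{a..x}|lborel. \<phi>1 t)" if x: "x \<in> {a..b}" for x
    proof -
      have "\<phi> x = \<phi> a + (LINT t:{a..x}|lborel. \<phi>1 t)" using H x unfolding H2_on_def by blast
      then show ?thesis using x ab by (simp add: \<psi>0_def)
    qed
    then show ?thesis using H unfolding H2_on_def by blast
  qed
  have "P \<psi>0"
    unfolding P_def
  proof (intro conjI exI allI impI)
    show "H2_on a b \<psi>0 \<phi>1 \<phi>2" by (rule H0)
    show "\<psi>0 a = 0" "\<psi>0 b = 0" using pa pb ab by (auto simp: \<psi>0_def)
    show "AE y in lborel. y \<in> {a..b} \<longrightarrow> - \<phi>2 y + of_real (\<alpha>\<^sup>2) * \<psi>0 y = vorticity \<alpha> \<phi> \<phi>2 y"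
      by (rule AE_I2) (simp add: \<psi>0_def vorticity_def)
    show "\<And>y. y \<notin> {a..b} \<Longrightarrow> \<psi>0 y = 0" by (auto simp: \<psi>0_def)
  qed
  moreover have "\<psi> = \<psi>0" if "P \<psi>" for \<psi>
  proof
    fix y
    obtain \<psi>1 \<psi>2 where H\<psi>: "H2_on a b \<psi> \<psi>1 \<psi>2" "\<psi> a = 0" "\<psi> b = 0"
      and ae: "AE y in lborel. y \<in> {a..b} \<longrightarrow> - \<psi>2 y + of_real (\<alpha>\<^sup>2) * \<psi> y = vorticity \<alpha> \<phi> \<phi>2 y"
      and out: "\<forall>y. y \<notin> {a..b} \<longrightarrow> \<psi> y = 0"
      using \<open>P \<psi>\<close> unfolding P_def by blast
    have "\<forall>y\<in>{a..b}. \<psi> y = \<phi> y"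
      by (rule helmholtz_dirichlet_unique[OF ab al H pa pb H\<psi>])
        (use ae in \<open>simp add: vorticity_def\<close>)
    then show "\<psi> y = \<psi>0 y"
      using out by (cases "y \<in> {a..b}") (auto simp: \<psi>0_def)
  qed
  ultimately have "dirichlet_inv a b \<alpha> (vorticity \<alpha> \<phi> \<phi>2) = \<psi>0"
    unfolding dirichlet_inv_def P_def[symmetric] by (rule the_equality)
  then show ?thesis by (simp add: \<psi>0_def)
qed

section \<open>Zeros of U - U_beta\<close>

lemma C3_onD:
  assumes "C3_on y1 y2 U U1 U2 U3"
  shows "y1 < y2"
    and "\<forall>y\<in>{y1..y2}. (U has_real_derivative U1 y) (at y within {y1..y2})"
    and "\<forall>y\<in>{y1..y2}. (U1 has_real_derivative U2 y) (at y within {y1..y2})"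
    and "continuous_on {y1..y2} U" and "continuous_on {y1..y2} U1" and "continuous_on {y1..y2} U2"
  using assms continuous_on_if_has_vector_derivative[of "{y1..y2}" U1 U2]
    continuous_on_if_has_vector_derivative[of "{y1..y2}" U U1]
    continuous_on_if_has_vector_derivative[of "{y1..y2}" U2 U3]
  unfolding C3_on_def has_real_derivative_iff_has_vector_derivative by blast+

lemma has_real_derivative_zero_if_islimpt_level_set:
  fixes g :: "real \<Rightarrow> real"
  assumes d: "(g has_real_derivative d) (at z within S)" and lp: "z islimpt T" and TS: "T \<subseteq> S"
    and gT: "\<forall>x\<in>T. g x = g z"
  shows "d = 0"
proof -
  have "((\<lambda>y. (g y - g z) / (y - z)) \<longlongrightarrow> d) (at z within S)" using d has_field_derivative_iff by blast
  then have L: "((\<lambda>y. (g y - g z) / (y - z)) \<longlongrightarrow> d) (at z within T)"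
    by (rule tendsto_mono[OF at_le[OF TS]])
  have "eventually (\<lambda>y. (g y - g z) / (y - z) = 0) (at z within T)"
    unfolding eventually_at_filter using gT by (auto intro!: always_eventually)
  then have L0: "((\<lambda>y. (g y - g z) / (y - z)) \<longlongrightarrow> 0) (at z within T)" by (rule tendsto_eventually)
  have "at z within T \<noteq> bot" using lp trivial_limit_within by blast
  then show "d = 0" by (rule tendsto_unique[OF _ L L0])
qed

text \<open>By Rolle's theorem between nearby points of the level set.\<close>
lemma islimpt_critical_points_if_islimpt_level_set:
  fixes f f' :: "real \<Rightarrow> real"
  assumes d: "\<forall>x\<in>{a..b}. (f has_real_derivative f' x) (at x within {a..b})"
    and z: "z \<in> {a..b}" "f z = v" and lp: "z islimpt {x\<in>{a..b}. f x = v}"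
  shows "z islimpt {x\<in>{a..b}. f' x = 0}"
  unfolding islimpt_approachable
proof (intro allI impI)
  fix e :: real assume "0 < e"
  then obtain x where x: "x \<in> {a..b}" "f x = v" "x \<noteq> z" "dist x z < e"
    using lp unfolding islimpt_approachable by auto
  define lo where "lo = min x z"
  define hi where "hi = max x z"
  have lohi: "lo < hi" "a \<le> lo" "hi \<le> b" "f lo = f hi"
    using x z by (auto simp: lo_def hi_def)
  have "continuous_on {a..b} f"
    using continuous_on_if_has_vector_derivative d
    unfolding has_real_derivative_iff_has_vector_derivative by blast
  then have clh: "continuous_on {lo..hi} f" by (rule continuous_on_subset) (use lohi in auto)
  have dlh: "(f has_derivative (*) (f' w)) (at w)" if "lo < w" "w < hi" for w
  proof -
    have "(f has_real_derivative f' w) (at w within {a..b})" using d that lohi by auto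
    then have "(f has_real_derivative f' w) (at w)"
      using that lohi by (simp add: at_within_Icc_at)
    then show ?thesis by (simp add: has_field_derivative_def)
  qed
  obtain w where w: "lo < w" "w < hi" and w0: "(*) (f' w) = (\<lambda>v. 0)"
    using Rolle_deriv[OF lohi(1,4) clh dlh] by blast
  have "f' w = 0" using fun_cong[OF w0, of 1] by simp
  moreover have "w \<in> {a..b}" "w \<noteq> z" "dist w z < e"
    using w lohi x by (auto simp: lo_def hi_def dist_real_def)
  ultimately show "\<exists>w\<in>{x\<in>{a..b}. f' x = 0}. w \<noteq> z \<and> dist w z < e" by blast
qed

lemma gronwall_vanishing:
  fixes E E' :: "real \<Rightarrow> real"
  assumes az: "a \<le> z" and zb: "z \<le> b" and C: "0 \<le> C"
    and dE: "\<And>t. a < t \<Longrightarrow> t < b \<Longrightarrow> (E has_real_derivative E' t) (at t)"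
    and cE: "continuous_on {a..b} E"
    and bnd: "\<And>t. a < t \<Longrightarrow> t < b \<Longrightarrow> \<bar>E' t\<bar> \<le> C * E t"
    and Ez: "E z = 0" and nn: "\<And>t. t \<in> {a..b} \<Longrightarrow> 0 \<le> E t"
  shows "\<forall>t\<in>{a..b}. E t = 0"
proof
  fix t assume t: "t \<in> {a..b}"
  have "E t \<le> 0"
  proof (cases "z \<le> t")
    case True
    define g where "g s = - (E s * exp (- C * s))" for s
    have "g z \<le> g t"
    proof (rule DERIV_nonneg_imp_increasing_open[OF True])
      fix s assume s: "z < s" "s < t"
      then have s': "a < s" "s < b" using az t by auto
      have "DERIV g s :> - (E' s * exp (- C * s) + E s * (exp (- C * s) * (- C)))"
        unfolding g_def by (auto intro!: derivative_eq_intros dE[OF s'])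
      moreover have "E' s * exp (- C * s) \<le> C * E s * exp (- C * s)"
        using bnd[OF s'] by (intro mult_right_mono) auto
      ultimately show "\<exists>y. DERIV g s :> y \<and> 0 \<le> y" by (auto simp: algebra_simps)
    next
      have "continuous_on {z..t} E" by (rule continuous_on_subset[OF cE]) (use az t in auto)
      then show "continuous_on {z..t} g" unfolding g_def by (intro continuous_intros)
    qed
    then have "E t * exp (- C * t) \<le> 0" using Ez by (simp add: g_def)
    then show "E t \<le> 0" by (simp add: mult_le_0_iff)
  next
    case False
    define g where "g s = E s * exp (C * s)" for s
    have "g t \<le> g z"
    proof (rule DERIV_nonneg_imp_increasing_open[of t z g])
      show "t \<le> z" using False by simp
      fix s assume s: "t < s" "s < z"
      then have s': "a < s" "s < b" using zb t by auto
      have "DERIV g s :> E' s * exp (C * s) + E s * (exp (C * s) * C)"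
        unfolding g_def by (auto intro!: derivative_eq_intros dE[OF s'])
      moreover have "- E' s * exp (C * s) \<le> C * E s * exp (C * s)"
        using bnd[OF s'] by (intro mult_right_mono) auto
      ultimately show "\<exists>y. DERIV g s :> y \<and> 0 \<le> y" by (auto simp: algebra_simps)
    next
      have "continuous_on {t..z} E" by (rule continuous_on_subset[OF cE]) (use zb t in auto)
      then show "continuous_on {t..z} g" unfolding g_def by (intro continuous_intros)
    qed
    then have "E t * exp (C * t) \<le> 0" using Ez by (simp add: g_def)
    then show "E t \<le> 0" by (simp add: mult_le_0_iff)
  qed
  with nn[OF t] show "E t = 0" by simp
qed

lemma abs_cross_term_le:
  fixes p q k B :: real
  assumes "\<bar>k\<bar> \<le> B"
  shows "\<bar>2 * q * p * (1 - k)\<bar> \<le> (1 + B) * (p\<^sup>2 + q\<^sup>2)"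
proof -
  have "0 \<le> (\<bar>p\<bar> - \<bar>q\<bar>)\<^sup>2" by simp
  then have pq: "2 * \<bar>p\<bar> * \<bar>q\<bar> \<le> p\<^sup>2 + q\<^sup>2" by (simp add: power2_diff)
  have k: "\<bar>1 - k\<bar> \<le> 1 + B" using assms by linarith
  have "\<bar>2 * q * p * (1 - k)\<bar> = (2 * \<bar>p\<bar> * \<bar>q\<bar>) * \<bar>1 - k\<bar>" by (simp add: abs_mult)
  also have "\<dots> \<le> (p\<^sup>2 + q\<^sup>2) * (1 + B)"
    by (rule mult_mono[OF pq k]) auto
  finally show ?thesis by (simp add: mult.commute)
qed

text \<open>For \<open>\<beta> = 0\<close> the flow solves the linear equation \<open>U'' = - K (U - U\<^sub>\<beta>)\<close> with bounded \<open>K\<close>;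
  the energy \<open>(U - U\<^sub>\<beta>)\<^sup>2 + U'\<^sup>2\<close> obeys a Gronwall inequality, so a double zero of \<open>U - U\<^sub>\<beta>\<close>
  propagates to the whole interval.\<close>
lemma Kuo_K_unique_continuation:
  fixes U U1 U2 U3 K :: "real \<Rightarrow> real"
  assumes C3: "C3_on y1 y2 U U1 U2 U3" and KK: "Kuo_K U U2 y1 y2 0 Ub K"
    and z: "z \<in> {y1..y2}" "U z = Ub" "U1 z = 0"
  shows "\<forall>y\<in>{y1..y2}. U y = Ub"
proof -
  have Krel: "\<forall>y\<in>{y1..y2}. U2 y = - K y * (U y - Ub)" using KK unfolding Kuo_K_def by auto
  obtain B where B: "\<forall>y\<in>{y1..y2}. \<bar>K y\<bar> \<le> B"
    using KK unfolding Kuo_K_def bounded_iff by auto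
  have B0: "0 \<le> B" using B z by force
  define E where "E t = (U t - Ub)\<^sup>2 + (U1 t)\<^sup>2" for t
  define E' where "E' t = 2 * (U t - Ub) * U1 t + 2 * U1 t * U2 t" for t
  have "\<forall>t\<in>{y1..y2}. E t = 0"
  proof (rule gronwall_vanishing[of y1 z y2 "1 + B" E E'])
    show "y1 \<le> z" "z \<le> y2" "0 \<le> 1 + B" using z B0 by auto
    fix t assume t: "y1 < t" "t < y2"
    then have t': "t \<in> {y1..y2}" by auto
    have "(U has_real_derivative U1 t) (at t within {y1..y2})"
      "(U1 has_real_derivative U2 t) (at t within {y1..y2})"
      using C3_onD(2,3)[OF C3] t' by blast+
    then have "(U has_real_derivative U1 t) (at t)" "(U1 has_real_derivative U2 t) (at t)"
      using t by (simp_all add: at_within_Icc_at)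
    then show "(E has_real_derivative E' t) (at t)"
      unfolding E_def E'_def by (auto intro!: derivative_eq_intros)
    have U2t: "U2 t = - K t * (U t - Ub)" using Krel t' by blast
    have "\<bar>2 * U1 t * (U t - Ub) * (1 - K t)\<bar> \<le> (1 + B) * ((U t - Ub)\<^sup>2 + (U1 t)\<^sup>2)"
      by (rule abs_cross_term_le) (use B t' in auto)
    moreover have "E' t = 2 * U1 t * (U t - Ub) * (1 - K t)"
      unfolding E'_def U2t by (simp add: algebra_simps)
    ultimately show "\<bar>E' t\<bar> \<le> (1 + B) * E t" by (simp add: E_def)
  next
    show "continuous_on {y1..y2} E" unfolding E_def by (intro continuous_intros C3_onD[OF C3])
    show "E z = 0" using z by (simp add: E_def)
    show "0 \<le> E t" for t by (simp add: E_def)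
  qed
  then show ?thesis by (simp add: E_def add_nonneg_eq_0_iff)
qed

lemma finite_level_set_if_Kuo_K:
  fixes U U1 U2 U3 K :: "real \<Rightarrow> real"
  assumes C3: "C3_on y1 y2 U U1 U2 U3" and nc: "\<exists>y\<in>{y1..y2}. U y \<noteq> U y1"
    and KK: "Kuo_K U U2 y1 y2 \<beta> Ub K"
  shows "finite {y\<in>{y1..y2}. U y = Ub}"
proof -
  define Z where "Z = {y\<in>{y1..y2}. U y = Ub}"
  have "closed Z"
    unfolding Z_def by (rule continuous_closed_preimage_constant[OF C3_onD(4)[OF C3] closed_atLeastAtMost])
  have "\<not> z islimpt Z" if z: "z \<in> {y1..y2}" for z
  proof
    assume lp: "z islimpt Z"
    have Uz: "U z = Ub" using \<open>closed Z\<close> lp closed_limpt by (auto simp: Z_def)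
    have U1z: "U1 z = 0"
      by (rule has_real_derivative_zero_if_islimpt_level_set[OF C3_onD(2)[OF C3, rule_format, OF z] lp])
        (use Uz in \<open>auto simp: Z_def\<close>)
    have "z islimpt {x\<in>{y1..y2}. U1 x = 0}"
      by (rule islimpt_critical_points_if_islimpt_level_set[OF C3_onD(2)[OF C3] z Uz lp[unfolded Z_def]])
    then have "U2 z = 0"
      by (rule has_real_derivative_zero_if_islimpt_level_set[OF C3_onD(3)[OF C3, rule_format, OF z]])
        (use U1z in auto)
    moreover have "K z * (U z - Ub) = \<beta> - U2 z" using KK z unfolding Kuo_K_def by blast
    ultimately have "\<beta> = 0" using Uz by simp
    then have "\<forall>y\<in>{y1..y2}. U y = Ub"
      using Kuo_K_unique_continuation[OF C3 _ z Uz U1z] KK by blast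
    then show False using nc C3_onD(1)[OF C3] by auto
  qed
  then have "finite ({y1..y2} \<inter> Z)"
    by (intro finite_not_islimpt_in_compact) auto
  moreover have "{y1..y2} \<inter> Z = Z" by (auto simp: Z_def)
  ultimately show ?thesis by (simp add: Z_def)
qed

section \<open>The identity for the quadratic form and unstable modes\<close>

lemma borel_measurable_cnj [measurable]: "cnj \<in> borel_measurable borel"
  by (intro borel_measurable_continuous_onI continuous_intros)

definition kuo_density :: "(real \<Rightarrow> real) \<Rightarrow> (real \<Rightarrow> real) \<Rightarrow> real \<Rightarrow> complex \<Rightarrow> (real \<Rightarrow> complex) \<Rightarrow> real \<Rightarrow> real"
  where "kuo_density U U2 \<beta> c \<psi> y = (\<beta> - U2 y) / (cmod (of_real (U y) - c))\<^sup>2 * (cmod (\<psi> y))\<^sup>2"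

lemma continuous_on_kuo_density:
  assumes "continuous_on S U" "continuous_on S U2" "continuous_on S \<psi>"
    and "\<forall>y\<in>S. of_real (U y) \<noteq> c"
  shows "continuous_on S (kuo_density U U2 \<beta> c \<psi>)"
  unfolding kuo_density_def[abs_def] using assms(4) by (intro continuous_intros assms(1-3)) auto

lemma rk_solutionD:
  assumes "rk_solution U U2 y1 y2 c \<alpha> \<beta> \<phi> \<phi>1 \<phi>2"
  shows "H2_on y1 y2 \<phi> \<phi>1 \<phi>2" and "\<phi> y1 = 0" and "\<phi> y2 = 0"
    and "AE y in lborel. y \<in> {y1..y2} \<longrightarrow>
           - \<phi>2 y + of_real (\<alpha>\<^sup>2) * \<phi> y - of_real (\<beta> - U2 y) / (of_real (U y) - c) * \<phi> y = 0"
proof -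
  show "H2_on y1 y2 \<phi> \<phi>1 \<phi>2" "\<phi> y1 = 0" "\<phi> y2 = 0"
    using assms unfolding rk_solution_def by blast+
  have "AE y in lborel. y \<in> {y1<..<y2} \<longrightarrow>
          - \<phi>2 y + of_real (\<alpha>\<^sup>2) * \<phi> y - of_real (\<beta> - U2 y) / (of_real (U y) - c) * \<phi> y = 0"
    using assms unfolding rk_solution_def by blast
  then show "AE y in lborel. y \<in> {y1..y2} \<longrightarrow>
          - \<phi>2 y + of_real (\<alpha>\<^sup>2) * \<phi> y - of_real (\<beta> - U2 y) / (of_real (U y) - c) * \<phi> y = 0"
    using AE_lborel_singleton[of y1] AE_lborel_singleton[of y2] by eventually_elim auto
qed

text \<open>Where \<open>U = c\<close> the division by zero makes \<open>\<omega> = 0\<close>, and both sides vanish.\<close>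
lemma L_form_integrand_eq:
  fixes \<omega> \<phi> c :: complex and k u u2 \<beta> Ub :: real
  assumes k: "0 < k" and kr: "k * (u - Ub) = \<beta> - u2"
    and eq: "\<omega> - of_real (\<beta> - u2) / (of_real u - c) * \<phi> = 0"
  shows "(\<omega> / of_real k - \<phi>) * cnj \<omega> =
           (c - of_real Ub) * of_real ((\<beta> - u2) / (cmod (of_real u - c))\<^sup>2 * (cmod \<phi>)\<^sup>2)"
proof (cases "of_real u - c = 0")
  case True
  then show ?thesis using eq by simp
next
  case False
  define d where "d = of_real u - c"
  have d0: "d \<noteq> 0" using False by (simp add: d_def)
  then have "cnj d \<noteq> 0" by simp
  have k0: "complex_of_real k \<noteq> 0" using k by simp
  have \<omega>: "\<omega> = of_real (\<beta> - u2) / d * \<phi>" using eq by (simp add: d_def)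
  have n: "complex_of_real (\<beta> - u2) = of_real k * (d + c - of_real Ub)"
    unfolding d_def using arg_cong[OF kr, of complex_of_real] by simp
  have e1: "\<omega> / of_real k - \<phi> = (c - of_real Ub) / d * \<phi>"
    unfolding \<omega> n using d0 k0 by (simp add: field_simps)
  have e2: "cnj \<omega> = complex_of_real (\<beta> - u2) / cnj d * cnj \<phi>" unfolding \<omega> by simp
  have "(\<omega> / of_real k - \<phi>) * cnj \<omega> =
      (c - of_real Ub) * (complex_of_real (\<beta> - u2) / (d * cnj d) * (\<phi> * cnj \<phi>))"
    unfolding e1 e2 using d0 \<open>cnj d \<noteq> 0\<close> by (simp add: field_simps)
  then show ?thesis
    by (simp only: d_def of_real_mult of_real_divide complex_norm_square)
qed

lemma Im_energy_density:
  fixes p1 \<phi> c :: complex and a n u :: real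
  assumes "of_real u - c \<noteq> 0"
  shows "Im (p1 * cnj p1 + (of_real a * \<phi> - of_real n / (of_real u - c) * \<phi>) * cnj \<phi>)
     = - Im c * (n / (cmod (of_real u - c))\<^sup>2 * (cmod \<phi>)\<^sup>2)"
proof -
  have nz: "(u - Re c)\<^sup>2 + (Im c)\<^sup>2 \<noteq> 0"
    using assms by (auto simp: complex_eq_iff)
  have c1: "(cmod (of_real u - c))\<^sup>2 = (u - Re c)\<^sup>2 + (Im c)\<^sup>2" by (simp add: cmod_power2)
  have c2: "(cmod \<phi>)\<^sup>2 = (Re \<phi>)\<^sup>2 + (Im \<phi>)\<^sup>2" by (simp add: cmod_power2)
  show ?thesis unfolding c1 c2 using nz
    by (simp add: Im_divide field_simps) (simp add: algebra_simps power2_eq_square)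
qed

text \<open>\<open>K\<close> is only determined off the zeros of \<open>U - U\<^sub>\<beta>\<close>, which are finitely many.\<close>
lemma borel_measurable_Kuo_K:
  fixes U U1 U2 U3 K :: "real \<Rightarrow> real"
  assumes C3: "C3_on y1 y2 U U1 U2 U3" and nc: "\<exists>y\<in>{y1..y2}. U y \<noteq> U y1"
    and KK: "Kuo_K U U2 y1 y2 \<beta> Ub K"
  shows "K \<in> borel_measurable (restrict_space lborel {y1..y2})"
proof (rule measurable_discrete_difference[where f="\<lambda>y. (\<beta> - U2 y) / (U y - Ub)"])
  define Z where "Z = {y\<in>{y1..y2}. U y = Ub}"
  show "countable Z"
    unfolding Z_def by (rule countable_finite[OF finite_level_set_if_Kuo_K[OF C3 nc KK]])
  have [measurable]: "U \<in> borel_measurable (restrict_space lborel {y1..y2})"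
    "U2 \<in> borel_measurable (restrict_space lborel {y1..y2})"
    by (intro borel_measurable_continuous_on_restrict_lborel C3_onD[OF C3])+
  show "(\<lambda>y. (\<beta> - U2 y) / (U y - Ub)) \<in> borel_measurable (restrict_space lborel {y1..y2})"
    by measurable
  show "{x} \<in> sets (restrict_space lborel {y1..y2})" if "x \<in> Z" for x
    using that by (subst sets_restrict_space_iff) (auto simp: Z_def)
  show "(\<beta> - U2 x) / (U x - Ub) = K x"
    if "x \<in> space (restrict_space lborel {y1..y2})" "x \<notin> Z" for x
    using that KK by (auto simp: space_restrict_space Z_def Kuo_K_def field_simps)
qed simp

lemma L_form_vorticity_eq:
  fixes U U1 U2 U3 K :: "real \<Rightarrow> real" and \<phi> \<phi>1 \<phi>2 :: "real \<Rightarrow> complex"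
  assumes C3: "C3_on y1 y2 U U1 U2 U3" and nc: "\<exists>y\<in>{y1..y2}. U y \<noteq> U y1"
    and KK: "Kuo_K U U2 y1 y2 \<beta> Ub K" and al: "0 < \<alpha>"
    and rk: "rk_solution U U2 y1 y2 c \<alpha> \<beta> \<phi> \<phi>1 \<phi>2"
  shows "L_form y1 y2 K \<alpha> (vorticity \<alpha> \<phi> \<phi>2) =
           (c - of_real Ub) * of_real (LINT y:{y1..y2}|lborel. kuo_density U U2 \<beta> c \<phi> y)"
proof -
  define R where "R = restrict_space lborel {y1..y2}"
  define \<omega> where "\<omega> = vorticity \<alpha> \<phi> \<phi>2"
  note H = rk_solutionD(1)[OF rk]
  have [measurable]: "U \<in> borel_measurable R" "U2 \<in> borel_measurable R" "\<phi> \<in> borel_measurable R"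
    unfolding R_def
    by (intro borel_measurable_continuous_on_restrict_lborel C3_onD[OF C3] H2_on_regularity(4)[OF H])+
  have [measurable]: "\<phi>2 \<in> borel_measurable R"
    using H unfolding H2_on_def R_def by (simp add: set_borel_measurable_iff_restrict)
  have [measurable]: "K \<in> borel_measurable R"
    unfolding R_def by (rule borel_measurable_Kuo_K[OF C3 nc KK])
  have "\<forall>y\<in>{y1..y2}. dirichlet_inv y1 y2 \<alpha> \<omega> y = \<phi> y"
    unfolding \<omega>_def
    by (rule dirichlet_inv_vorticity[OF C3_onD(1)[OF C3] _ H rk_solutionD(2,3)[OF rk]])
      (use al in simp)
  then have "L_form y1 y2 K \<alpha> \<omega> = (LINT y:{y1..y2}|lborel. (\<omega> y / of_real (K y) - \<phi> y) * cnj (\<omega> y))"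
    unfolding L_form_def by (intro set_lebesgue_integral_cong) auto
  also have "\<dots> = (LINT y:{y1..y2}|lborel. (c - of_real Ub) * of_real (kuo_density U U2 \<beta> c \<phi> y))"
  proof (rule set_lebesgue_integral_cong_AE_restrict)
    show "(\<lambda>y. (\<omega> y / of_real (K y) - \<phi> y) * cnj (\<omega> y)) \<in> borel_measurable (restrict_space lborel {y1..y2})"
      unfolding R_def[symmetric] \<omega>_def vorticity_def by measurable
    show "(\<lambda>y. (c - of_real Ub) * of_real (kuo_density U U2 \<beta> c \<phi> y)) \<in> borel_measurable (restrict_space lborel {y1..y2})"
      unfolding R_def[symmetric] kuo_density_def by measurable
    show "AE y in lborel. y \<in> {y1..y2} \<longrightarrow> (\<omega> y / of_real (K y) - \<phi> y) * cnj (\<omega> y) =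
            (c - of_real Ub) * of_real (kuo_density U U2 \<beta> c \<phi> y)"
      using rk_solutionD(4)[OF rk]
    proof eventually_elim
      case (elim y)
      show ?case
      proof
        assume y: "y \<in> {y1..y2}"
        then have "0 < K y" "K y * (U y - Ub) = \<beta> - U2 y" using KK unfolding Kuo_K_def by blast+
        then show "(\<omega> y / of_real (K y) - \<phi> y) * cnj (\<omega> y) =
            (c - of_real Ub) * of_real (kuo_density U U2 \<beta> c \<phi> y)"
          unfolding kuo_density_def
          by (rule L_form_integrand_eq) (use elim y in \<open>simp add: \<omega>_def vorticity_def\<close>)
      qed
    qed
  qed simp
  also have "\<dots> = (c - of_real Ub) * of_real (LINT y:{y1..y2}|lborel. kuo_density U U2 \<beta> c \<phi> y)"
    by (simp add: set_integral_complex_of_real)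
  finally show ?thesis by (simp add: \<omega>_def)
qed

text \<open>The imaginary part of the energy identity
  \<open>\<integral> |\<phi>'|\<^sup>2 + (\<alpha>\<^sup>2 - (\<beta> - U'')/(U - c)) |\<phi>|\<^sup>2 = 0\<close>.\<close>
lemma kuo_integral_zero_if_Im_nonzero:
  fixes U U1 U2 U3 :: "real \<Rightarrow> real" and \<phi> \<phi>1 \<phi>2 :: "real \<Rightarrow> complex"
  assumes C3: "C3_on y1 y2 U U1 U2 U3" and rk: "rk_solution U U2 y1 y2 c \<alpha> \<beta> \<phi> \<phi>1 \<phi>2"
    and imc: "Im c \<noteq> 0"
  shows "(LINT y:{y1..y2}|lborel. kuo_density U U2 \<beta> c \<phi> y) = 0"
proof -
  note H = rk_solutionD(1)[OF rk]
  have y12: "y1 \<le> y2" using C3_onD(1)[OF C3] by simp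
  have nz: "\<And>y. of_real (U y) - c \<noteq> 0" using imc by (auto simp: complex_eq_iff)
  define g where "g y = of_real (\<alpha>\<^sup>2) * \<phi> y - of_real (\<beta> - U2 y) / (of_real (U y) - c) * \<phi> y" for y
  have "\<forall>x\<in>{y1..y2}. (\<phi>1 has_vector_derivative g x) (at x within {y1..y2})"
  proof (rule H2_second_derivative_if_AE_continuous)
    show "set_borel_measurable lborel {y1..y2} \<phi>2"
      "\<forall>x\<in>{y1..y2}. \<phi>1 x = \<phi>1 y1 + (LINT t:{y1..x}|lborel. \<phi>2 t)"
      using H unfolding H2_on_def by blast+
    show "continuous_on {y1..y2} g"
      unfolding g_def using nz
      by (intro continuous_intros H2_on_regularity(4)[OF H] C3_onD[OF C3]) auto
    show "AE x in lborel. x \<in> {y1..y2} \<longrightarrow> \<phi>2 x = g x"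
      using rk_solutionD(4)[OF rk] by eventually_elim (auto simp: g_def algebra_simps)
  qed
  from dirichlet_integration_by_parts[OF y12 H2_on_regularity(3)[OF H] this rk_solutionD(2,3)[OF rk]]
  have "((\<lambda>x. \<phi>1 x * cnj (\<phi>1 x) + g x * cnj (\<phi> x)) has_integral 0) {y1..y2}" .
  from has_integral_linear[OF this bounded_linear_Im]
  have "((\<lambda>x. Im (\<phi>1 x * cnj (\<phi>1 x) + g x * cnj (\<phi> x))) has_integral 0) {y1..y2}"
    by (simp add: o_def)
  moreover have "Im (\<phi>1 x * cnj (\<phi>1 x) + g x * cnj (\<phi> x)) = (- Im c) *\<^sub>R kuo_density U U2 \<beta> c \<phi> x" for x
    unfolding g_def kuo_density_def real_scaleR_def by (rule Im_energy_density[OF nz])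
  ultimately have "((\<lambda>x. (- Im c) *\<^sub>R kuo_density U U2 \<beta> c \<phi> x) has_integral (- Im c) *\<^sub>R 0) {y1..y2}"
    by simp
  then have "(kuo_density U U2 \<beta> c \<phi> has_integral 0) {y1..y2}"
    using has_integral_cmul_iff[of "- Im c" "kuo_density U U2 \<beta> c \<phi>" 0] imc by simp
  moreover have "continuous_on {y1..y2} (kuo_density U U2 \<beta> c \<phi>)"
    using nz by (intro continuous_on_kuo_density C3_onD[OF C3] H2_on_regularity(4)[OF H]) auto
  then have "set_integrable lborel {y1..y2} (kuo_density U U2 \<beta> c \<phi>)"
    unfolding set_integrable_def by (rule borel_integrable_compact[OF compact_Icc])
  ultimately show ?thesis
    by (simp add: set_borel_integral_eq_integral(2) integral_unique)
qed

section \<open>Neutral limiting modes\<close>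

lemma set_integral_tendsto_if_eventually_bounded:
  fixes F :: "nat \<Rightarrow> real \<Rightarrow> real" and f :: "real \<Rightarrow> real"
  assumes S: "compact S" and cF: "\<And>k. continuous_on S (F k)" and cf: "continuous_on S f"
    and bnd: "eventually (\<lambda>k. \<forall>y\<in>S. \<bar>F k y\<bar> \<le> W) sequentially"
    and lim: "\<And>y. y \<in> S \<Longrightarrow> (\<lambda>k. F k y) \<longlonglongrightarrow> f y"
  shows "(\<lambda>k. LINT y:S|lborel. F k y) \<longlonglongrightarrow> (LINT y:S|lborel. f y)"
proof -
  obtain N where N: "\<And>k y. N \<le> k \<Longrightarrow> y \<in> S \<Longrightarrow> \<bar>F k y\<bar> \<le> W"
    using bnd unfolding eventually_sequentially by blast
  have Sb: "S \<in> sets borel" using S by (simp add: compact_imp_closed)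
  have "(\<lambda>i. LINT y:S|lborel. F (i + N) y) \<longlonglongrightarrow> (LINT y:S|lborel. f y)"
    unfolding set_lebesgue_integral_def
  proof (rule integral_dominated_convergence[where w="\<lambda>y. indicator S y *\<^sub>R W"])
    show "(\<lambda>y. indicator S y *\<^sub>R f y) \<in> borel_measurable lborel"
      using borel_measurable_continuous_on_indicator[OF Sb cf] by simp
    show "(\<lambda>y. indicator S y *\<^sub>R F (i + N) y) \<in> borel_measurable lborel" for i
      using borel_measurable_continuous_on_indicator[OF Sb cF] by simp
    show "integrable lborel (\<lambda>y. indicator S y *\<^sub>R W)"
      by (rule borel_integrable_compact[OF S]) (intro continuous_intros)
    show "AE y in lborel. (\<lambda>i. indicator S y *\<^sub>R F (i + N) y) \<longlonglongrightarrow> indicator S y *\<^sub>R f y"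
      by (intro AE_I2) (auto simp: indicator_def intro: LIMSEQ_ignore_initial_segment lim)
    show "AE y in lborel. norm (indicator S y *\<^sub>R F (i + N) y) \<le> indicator S y *\<^sub>R W" for i
      by (intro AE_I2) (simp add: indicator_def N)
  qed
  then show ?thesis by (rule LIMSEQ_offset)
qed

lemma abs_divide_square_mult_square_le:
  fixes a d p B e P :: real
  assumes "\<bar>a\<bar> \<le> B" "0 < e" "e \<le> d" "0 \<le> p" "p \<le> P"
  shows "\<bar>a / d\<^sup>2 * p\<^sup>2\<bar> \<le> B / e\<^sup>2 * P\<^sup>2"
proof -
  have d: "0 < d" using assms by linarith
  have "\<bar>a / d\<^sup>2 * p\<^sup>2\<bar> = \<bar>a\<bar> / d\<^sup>2 * p\<^sup>2" using d by (simp add: abs_mult)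
  also have "\<dots> \<le> B / e\<^sup>2 * P\<^sup>2"
  proof (rule mult_mono)
    show "\<bar>a\<bar> / d\<^sup>2 \<le> B / e\<^sup>2"
      by (rule frac_le) (use assms in \<open>auto intro: power_mono order_trans[OF abs_ge_zero]\<close>)
    show "p\<^sup>2 \<le> P\<^sup>2" by (rule power_mono) (use assms in auto)
    show "0 \<le> B / e\<^sup>2" using assms by (auto intro: order_trans[OF abs_ge_zero])
  qed simp
  finally show ?thesis .
qed

lemma eventually_kuo_density_bounded:
  assumes \<delta>: "0 < \<delta>" "\<forall>y\<in>S. \<delta> \<le> cmod (of_real (U y) - c)"
    and M: "\<forall>y\<in>S. cmod (\<phi> y) \<le> M" and B: "\<forall>y\<in>S. \<bar>\<beta> - U2 y\<bar> \<le> B"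
    and ck: "ck \<longlonglongrightarrow> c" and ul: "uniform_limit S \<phi>k \<phi> sequentially"
  shows "eventually (\<lambda>k. \<forall>y\<in>S.
           \<bar>kuo_density U U2 \<beta> (ck k) (\<phi>k k) y\<bar> \<le> B / (\<delta> / 2)\<^sup>2 * (M + 1)\<^sup>2) sequentially"
proof -
  have "eventually (\<lambda>k. \<forall>y\<in>S. dist (\<phi>k k y) (\<phi> y) < 1) sequentially"
    by (rule uniform_limitD[OF ul]) simp
  moreover have "eventually (\<lambda>k. dist (ck k) c < \<delta> / 2) sequentially"
    by (rule tendstoD[OF ck]) (use \<delta> in simp)
  ultimately show ?thesis
  proof eventually_elim
    case (elim k)
    show ?case
    proof
      fix y assume y: "y \<in> S"
      have "cmod (of_real (U y) - c) \<le> cmod (of_real (U y) - ck k) + cmod (ck k - c)"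
        using norm_triangle_ineq[of "of_real (U y) - ck k" "ck k - c"] by simp
      moreover have "cmod (ck k - c) < \<delta> / 2" using elim by (simp add: dist_norm)
      ultimately have "\<delta> / 2 \<le> cmod (of_real (U y) - ck k)" using \<delta>(2) y by force
      moreover have "cmod (\<phi>k k y) \<le> M + 1"
        using norm_triangle_ineq[of "\<phi>k k y - \<phi> y" "\<phi> y"] elim(1)[rule_format, OF y] M[rule_format, OF y]
        by (simp add: dist_norm)
      ultimately show "\<bar>kuo_density U U2 \<beta> (ck k) (\<phi>k k) y\<bar> \<le> B / (\<delta> / 2)\<^sup>2 * (M + 1)\<^sup>2"
        unfolding kuo_density_def by (intro abs_divide_square_mult_square_le) (use B y \<delta> in auto)
    qed
  qed
qed

lemma kuo_integral_tendsto:
  fixes U U2 :: "real \<Rightarrow> real" and \<phi> :: "real \<Rightarrow> complex" and \<phi>k :: "nat \<Rightarrow> real \<Rightarrow> complex"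
    and ck :: "nat \<Rightarrow> complex"
  assumes S: "compact S" and cU: "continuous_on S U" and cU2: "continuous_on S U2"
    and c\<phi>: "continuous_on S \<phi>" and c\<phi>k: "\<And>k. continuous_on S (\<phi>k k)"
    and avoid: "\<forall>y\<in>S. of_real (U y) \<noteq> c" and avoidk: "\<And>k. \<forall>y\<in>S. of_real (U y) \<noteq> ck k"
    and ck: "ck \<longlonglongrightarrow> c" and ul: "uniform_limit S \<phi>k \<phi> sequentially"
  shows "(\<lambda>k. LINT y:S|lborel. kuo_density U U2 \<beta> (ck k) (\<phi>k k) y)
           \<longlonglongrightarrow> (LINT y:S|lborel. kuo_density U U2 \<beta> c \<phi> y)"
proof -
  obtain \<delta> where \<delta>: "0 < \<delta>" "\<forall>y\<in>S. \<delta> \<le> cmod (of_real (U y) - c)"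
  proof (cases "S = {}")
    case False
    have "continuous_on S (\<lambda>y. cmod (of_real (U y) - c))" by (intro continuous_intros cU)
    then obtain y0 where "y0 \<in> S" "\<forall>y\<in>S. cmod (of_real (U y0) - c) \<le> cmod (of_real (U y) - c)"
      using continuous_attains_inf[OF S False] by blast
    then show ?thesis using that[of "cmod (of_real (U y0) - c)"] avoid by auto
  qed (use that[of 1] in simp)
  obtain M where M: "\<forall>y\<in>S. cmod (\<phi> y) \<le> M"
    using compact_imp_bounded[OF compact_continuous_image[OF c\<phi> S]] unfolding bounded_iff by auto
  have "continuous_on S (\<lambda>y. \<beta> - U2 y)" by (intro continuous_intros cU2)
  then have "bounded ((\<lambda>y. \<beta> - U2 y) ` S)"
    by (rule compact_imp_bounded[OF compact_continuous_image[OF _ S]])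
  then obtain B where B: "\<forall>y\<in>S. \<bar>\<beta> - U2 y\<bar> \<le> B" unfolding bounded_iff by auto
  have "(\<lambda>k. kuo_density U U2 \<beta> (ck k) (\<phi>k k) y) \<longlonglongrightarrow> kuo_density U U2 \<beta> c \<phi> y"
    if "y \<in> S" for y
    unfolding kuo_density_def
    using avoid that by (intro tendsto_intros ck tendsto_uniform_limitI[OF ul]) auto
  then show ?thesis
    by (intro set_integral_tendsto_if_eventually_bounded[OF S _ _ eventually_kuo_density_bounded[OF \<delta> M B ck ul]]
        continuous_on_kuo_density cU cU2 c\<phi> c\<phi>k avoid avoidk)
qed

lemma unstable_modeD:
  fixes U U1 U2 U3 :: "real \<Rightarrow> real" and \<psi> :: "real \<Rightarrow> complex"
  assumes C3: "C3_on y1 y2 U U1 U2 U3" and um: "unstable_mode U U2 y1 y2 c \<alpha> \<beta> \<psi>"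
  shows "continuous_on {y1..y2} \<psi>" and "(LINT y:{y1..y2}|lborel. kuo_density U U2 \<beta> c \<psi> y) = 0"
    and "of_real (U y) \<noteq> c"
proof -
  obtain \<psi>1 \<psi>2 where rk: "rk_solution U U2 y1 y2 c \<alpha> \<beta> \<psi> \<psi>1 \<psi>2" and im: "0 < Im c"
    using um unfolding unstable_mode_def by blast
  show "continuous_on {y1..y2} \<psi>" by (rule H2_on_regularity(4)[OF rk_solutionD(1)[OF rk]])
  show "(LINT y:{y1..y2}|lborel. kuo_density U U2 \<beta> c \<psi> y) = 0"
    using kuo_integral_zero_if_Im_nonzero[OF C3 rk] im by simp
  show "of_real (U y) \<noteq> c"
    using im by (auto simp: complex_eq_iff)
qed

lemma neutral_limiting_modeE:
  assumes "neutral_limiting_mode U U2 y1 y2 c \<alpha> \<beta> \<phi>"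
  obtains ck \<alpha>k \<phi>k where "Im c = 0" and "\<And>k. unstable_mode U U2 y1 y2 (ck k) (\<alpha>k k) \<beta> (\<phi>k k)"
    and "ck \<longlonglongrightarrow> c"
    and "\<And>S. compact S \<Longrightarrow> S \<subseteq> {y1..y2} \<Longrightarrow> \<forall>y\<in>S. of_real (U y) \<noteq> c \<Longrightarrow>
           uniform_limit S \<phi>k \<phi> sequentially"
proof -
  have "\<exists>ck \<alpha>k \<phi>k. (\<forall>k. unstable_mode U U2 y1 y2 (ck k) (\<alpha>k k) \<beta> (\<phi>k k) \<and>
             (LINT y:{y1..y2}|lborel. (cmod (\<phi>k k y))\<^sup>2) = 1) \<and>
        ck \<longlonglongrightarrow> c \<and> \<alpha>k \<longlonglongrightarrow> \<alpha> \<and>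
        (\<forall>S. compact S \<and> S \<subseteq> {y1..y2} - {y. of_real (U y) = c} \<longrightarrow>
             uniform_limit S \<phi>k \<phi> sequentially)"
    using assms unfolding neutral_limiting_mode_def by blast
  then obtain ck \<alpha>k \<phi>k where "\<forall>k. unstable_mode U U2 y1 y2 (ck k) (\<alpha>k k) \<beta> (\<phi>k k)"
    and "ck \<longlonglongrightarrow> c"
    and ul: "\<forall>S. compact S \<and> S \<subseteq> {y1..y2} - {y. of_real (U y) = c} \<longrightarrow>
               uniform_limit S \<phi>k \<phi> sequentially"
    by (elim exE conjE) blast
  moreover have "Im c = 0" using assms unfolding neutral_limiting_mode_def by blast
  moreover have "uniform_limit S \<phi>k \<phi> sequentially"
    if "compact S" "S \<subseteq> {y1..y2}" "\<forall>y\<in>S. of_real (U y) \<noteq> c" for S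
    using ul that by blast
  ultimately show ?thesis using that by blast
qed

lemma neutral_limiting_kuo_integral_tendsto:
  fixes U U1 U2 U3 :: "real \<Rightarrow> real" and \<phi> :: "real \<Rightarrow> complex"
  assumes C3: "C3_on y1 y2 U U1 U2 U3" and c\<phi>: "continuous_on {y1..y2} \<phi>"
    and um: "\<And>k. unstable_mode U U2 y1 y2 (ck k) (\<alpha>k k) \<beta> (\<phi>k k)" and ck: "ck \<longlonglongrightarrow> c"
    and S: "compact S" "S \<subseteq> {y1..y2}" "\<forall>y\<in>S. of_real (U y) \<noteq> c"
    and ul: "uniform_limit S \<phi>k \<phi> sequentially"
  shows "(\<lambda>k. LINT y:S|lborel. kuo_density U U2 \<beta> (ck k) (\<phi>k k) y)
           \<longlonglongrightarrow> (LINT y:S|lborel. kuo_density U U2 \<beta> c \<phi> y)"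
  by (rule kuo_integral_tendsto[OF S(1) _ _ _ _ S(3) _ ck ul])
    (use S(2) unstable_modeD[OF C3 um] in \<open>auto intro: continuous_on_subset C3_onD[OF C3] c\<phi>\<close>)

lemma neutral_nonresonant_kuo_integral_zero:
  fixes U U1 U2 U3 :: "real \<Rightarrow> real" and \<phi> :: "real \<Rightarrow> complex"
  assumes C3: "C3_on y1 y2 U U1 U2 U3" and c\<phi>: "continuous_on {y1..y2} \<phi>"
    and NL: "neutral_limiting_mode U U2 y1 y2 c \<alpha> \<beta> \<phi>" and NR: "nonresonant_mode U y1 y2 c"
  shows "(LINT y:{y1..y2}|lborel. kuo_density U U2 \<beta> c \<phi> y) = 0"
proof -
  obtain ck \<alpha>k \<phi>k where um: "\<And>k. unstable_mode U U2 y1 y2 (ck k) (\<alpha>k k) \<beta> (\<phi>k k)"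
    and ck: "ck \<longlonglongrightarrow> c"
    and ul: "\<And>S. compact S \<Longrightarrow> S \<subseteq> {y1..y2} \<Longrightarrow> \<forall>y\<in>S. of_real (U y) \<noteq> c \<Longrightarrow>
               uniform_limit S \<phi>k \<phi> sequentially"
    using neutral_limiting_modeE[OF NL] by metis
  have avoid: "\<forall>y\<in>{y1..y2}. of_real (U y) \<noteq> c" using NR unfolding nonresonant_mode_def by auto
  have "(\<lambda>k. LINT y:{y1..y2}|lborel. kuo_density U U2 \<beta> (ck k) (\<phi>k k) y)
          \<longlonglongrightarrow> (LINT y:{y1..y2}|lborel. kuo_density U U2 \<beta> c \<phi> y)"
    using neutral_limiting_kuo_integral_tendsto[OF C3 c\<phi> um ck compact_Icc order_refl avoid]
      ul[OF compact_Icc order_refl avoid] by blast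
  moreover have "(\<lambda>k. LINT y:{y1..y2}|lborel. kuo_density U U2 \<beta> (ck k) (\<phi>k k) y) = (\<lambda>k. 0)"
    using unstable_modeD(2)[OF C3 um] by simp
  ultimately show ?thesis using LIMSEQ_unique tendsto_const by metis
qed

lemma set_integral_Diff_split:
  fixes h :: "real \<Rightarrow> real"
  assumes h: "set_integrable lborel P h" and P: "P \<in> sets lborel" and A: "A \<in> sets lborel" "A \<subseteq> P"
  shows "(LINT y:P|lborel. h y) = (LINT y:A|lborel. h y) + (LINT y:P - A|lborel. h y)"
proof -
  have "(LINT y:A \<union> (P - A)|lborel. h y) = (LINT y:A|lborel. h y) + (LINT y:P - A|lborel. h y)"
    by (intro set_integral_Un set_integrable_subset[OF h]) (use P A in auto)
  moreover have "A \<union> (P - A) = P" using A by auto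
  ultimately show ?thesis by simp
qed

lemma set_integral_le_if_nonneg_on_Diff:
  fixes h :: "real \<Rightarrow> real"
  assumes h: "set_integrable lborel P h" and P: "P \<in> sets lborel" and A: "A \<in> sets lborel" "A \<subseteq> P"
    and nonneg: "\<And>y. y \<in> P - A \<Longrightarrow> 0 \<le> h y"
  shows "(LINT y:A|lborel. h y) \<le> (LINT y:P|lborel. h y)"
proof -
  have "0 \<le> (LINT y:P - A|lborel. h y)"
    unfolding set_lebesgue_integral_def
    by (intro integral_nonneg_AE AE_I2) (simp add: indicator_def nonneg)
  then show ?thesis using set_integral_Diff_split[OF h P A] by simp
qed

lemma set_integral_le_if_inner_approx:
  fixes h :: "real \<Rightarrow> real"
  assumes h: "set_integrable lborel P h" and P: "P \<in> sets lborel"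
    and A: "\<And>n. A n \<in> sets lborel" "\<And>n. A n \<subseteq> P"
    and exhaust: "\<And>y. y \<in> P \<Longrightarrow> h y \<noteq> 0 \<Longrightarrow> eventually (\<lambda>n. y \<in> A n) sequentially"
    and le: "\<And>n. (LINT y:A n|lborel. h y) \<le> L"
  shows "(LINT y:P|lborel. h y) \<le> L"
proof (rule LIMSEQ_le_const2)
  show "(\<lambda>n. LINT y:A n|lborel. h y) \<longlonglongrightarrow> (LINT y:P|lborel. h y)"
    unfolding set_lebesgue_integral_def
  proof (rule integral_dominated_convergence[where w="\<lambda>y. indicator P y *\<^sub>R \<bar>h y\<bar>"])
    show "(\<lambda>y. indicator P y *\<^sub>R h y) \<in> borel_measurable lborel"
      using h unfolding set_integrable_def by (rule borel_measurable_integrable)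
    show "(\<lambda>y. indicator (A n) y *\<^sub>R h y) \<in> borel_measurable lborel" for n
      using set_integrable_subset[OF h A(1,2)] unfolding set_integrable_def
      by (rule borel_measurable_integrable)
    show "integrable lborel (\<lambda>y. indicator P y *\<^sub>R \<bar>h y\<bar>)"
      using set_integrable_abs[OF h] unfolding set_integrable_def .
    show "AE y in lborel. norm (indicator (A n) y *\<^sub>R h y) \<le> indicator P y *\<^sub>R \<bar>h y\<bar>" for n
      using A(2)[of n] by (intro AE_I2) (auto simp: indicator_def)
    show "AE y in lborel. (\<lambda>n. indicator (A n) y *\<^sub>R h y) \<longlonglongrightarrow> indicator P y *\<^sub>R h y"
    proof (rule AE_I2)
      fix y
      show "(\<lambda>n. indicator (A n) y *\<^sub>R h y) \<longlonglongrightarrow> indicator P y *\<^sub>R h y"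
      proof (cases "y \<in> P \<and> h y \<noteq> 0")
        case True
        then have "eventually (\<lambda>n. indicator (A n) y *\<^sub>R h y = indicator P y *\<^sub>R h y) sequentially"
          using exhaust[of y] by (auto elim: eventually_mono)
        then show ?thesis by (rule tendsto_eventually)
      next
        case False
        then have "(\<lambda>n. indicator (A n) y *\<^sub>R h y) = (\<lambda>n. indicator P y *\<^sub>R h y)"
          using A(2) by (auto simp: indicator_def fun_eq_iff)
        then show ?thesis by simp
      qed
    qed
  qed
  show "\<exists>N. \<forall>n\<ge>N. (LINT y:A n|lborel. h y) \<le> L" using le by blast
qed

lemma kuo_density_sign:
  assumes KK: "Kuo_K U U2 y1 y2 \<beta> Ub K" and y: "y \<in> {y1..y2}" and s: "0 \<le> s * (U y - Ub)"
  shows "0 \<le> s * kuo_density U U2 \<beta> c \<psi> y"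
proof -
  have K: "0 < K y" "K y * (U y - Ub) = \<beta> - U2 y" using KK y unfolding Kuo_K_def by blast+
  have "s * (\<beta> - U2 y) = K y * (s * (U y - Ub))" unfolding K(2)[symmetric] by (simp add: algebra_simps)
  also have "\<dots> \<ge> 0" using K(1) s by simp
  finally show ?thesis unfolding kuo_density_def by (simp add: mult.assoc[symmetric])
qed

lemma compact_exhaustion_Icc:
  fixes f g :: "real \<Rightarrow> real"
  assumes f: "continuous_on {a..b} f" and g: "continuous_on {a..b} g"
  defines "A n \<equiv> {y \<in> {y\<in>{a..b}. 1 / (real n + 1) \<le> \<bar>f y\<bar>}. 1 / (real n + 1) \<le> g y}"
  shows "compact (A n)" and "A n \<subseteq> {y\<in>{a..b}. f y \<noteq> 0 \<and> 0 < g y}"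
    and "y \<in> {a..b} \<Longrightarrow> f y \<noteq> 0 \<Longrightarrow> 0 < g y \<Longrightarrow> eventually (\<lambda>n. y \<in> A n) sequentially"
proof -
  have "closed (A n)"
    unfolding A_def
    by (intro continuous_on_closed_Collect_le continuous_intros
        continuous_on_subset[OF f] continuous_on_subset[OF g]) auto
  moreover have "A n \<subseteq> {a..b}" by (auto simp: A_def)
  ultimately show "compact (A n)"
    by (meson bounded_closed_interval bounded_subset compact_eq_bounded_closed)
  have pos: "0 < 1 / (real n + 1)" by simp
  show "A n \<subseteq> {y\<in>{a..b}. f y \<noteq> 0 \<and> 0 < g y}"
  proof
    fix y assume "y \<in> A n"
    then have "y \<in> {a..b}" "1 / (real n + 1) \<le> \<bar>f y\<bar>" "1 / (real n + 1) \<le> g y"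
      by (auto simp: A_def)
    then show "y \<in> {y\<in>{a..b}. f y \<noteq> 0 \<and> 0 < g y}" using less_le_trans[OF pos] by force
  qed
  assume y: "y \<in> {a..b}" "f y \<noteq> 0" "0 < g y"
  then obtain m where m: "inverse (real (Suc m)) < min \<bar>f y\<bar> (g y)"
    using reals_Archimedean[of "min \<bar>f y\<bar> (g y)"] by auto
  have "y \<in> A n" if "m \<le> n" for n
  proof -
    have "1 / (real n + 1) \<le> inverse (real (Suc m))"
      using that by (auto simp: inverse_eq_divide intro!: divide_left_mono)
    then show ?thesis using m y by (auto simp: A_def)
  qed
  then show "eventually (\<lambda>n. y \<in> A n) sequentially" by (rule eventually_sequentiallyI)
qed

lemma neutral_limiting_kuo_integral_compact_bound:
  fixes U U1 U2 U3 K :: "real \<Rightarrow> real" and \<phi> :: "real \<Rightarrow> complex"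
  assumes C3: "C3_on y1 y2 U U1 U2 U3" and KK: "Kuo_K U U2 y1 y2 \<beta> Ub K"
    and c\<phi>: "continuous_on {y1..y2} \<phi>" and NL: "neutral_limiting_mode U U2 y1 y2 c \<alpha> \<beta> \<phi>"
    and A: "compact A" "A \<subseteq> {y\<in>{y1..y2}. 0 < (Re c - Ub) * (U y - Ub)}" "\<forall>y\<in>A. of_real (U y) \<noteq> c"
  defines "N \<equiv> {y\<in>{y1..y2}. (Re c - Ub) * (U y - Ub) \<le> 0}"
  shows "(Re c - Ub) * (LINT y:A|lborel. kuo_density U U2 \<beta> c \<phi> y)
           \<le> - ((Re c - Ub) * (LINT y:N|lborel. kuo_density U U2 \<beta> c \<phi> y))"
proof (cases "Re c = Ub")
  case False
  obtain ck \<alpha>k \<phi>k where imc: "Im c = 0"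
    and um: "\<And>k. unstable_mode U U2 y1 y2 (ck k) (\<alpha>k k) \<beta> (\<phi>k k)" and ck: "ck \<longlonglongrightarrow> c"
    and ul: "\<And>S. compact S \<Longrightarrow> S \<subseteq> {y1..y2} \<Longrightarrow> \<forall>y\<in>S. of_real (U y) \<noteq> c \<Longrightarrow>
               uniform_limit S \<phi>k \<phi> sequentially"
    using neutral_limiting_modeE[OF NL] by metis
  define s where "s = Re c - Ub"
  define P where "P = {y1..y2} - N"
  define Fk where "Fk k = kuo_density U U2 \<beta> (ck k) (\<phi>k k)" for k
  have "closed N"
    unfolding N_def by (intro continuous_on_closed_Collect_le continuous_intros C3_onD[OF C3])
  moreover have "N \<subseteq> {y1..y2}" by (auto simp: N_def)
  ultimately have N: "compact N" "N \<subseteq> {y1..y2}"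
    by (meson bounded_closed_interval bounded_subset compact_eq_bounded_closed)+
  have "\<forall>y\<in>N. of_real (U y) \<noteq> c"
    using False imc by (auto simp: N_def complex_eq_iff mult_le_0_iff)
  note N = N this
  have sub: "A \<subseteq> P" "P \<subseteq> {y1..y2}" "A \<subseteq> {y1..y2}" using A(2) by (auto simp: P_def N_def)
  have borel: "A \<in> sets lborel" "N \<in> sets lborel" "P \<in> sets lborel"
    using A(1) N(1) by (auto simp: P_def compact_imp_closed)
  have tendsto: "(\<lambda>k. s * (LINT y:S|lborel. Fk k y)) \<longlonglongrightarrow> s * (LINT y:S|lborel. kuo_density U U2 \<beta> c \<phi> y)"
    if "compact S" "S \<subseteq> {y1..y2}" "\<forall>y\<in>S. of_real (U y) \<noteq> c" for S
    unfolding Fk_def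
    by (intro tendsto_mult_left neutral_limiting_kuo_integral_tendsto[OF C3 c\<phi> um ck that ul[OF that]])
  have intFk: "set_integrable lborel {y1..y2} (\<lambda>y. s * Fk k y)" for k
    unfolding set_integrable_def Fk_def
    by (intro borel_integrable_compact compact_Icc continuous_intros continuous_on_kuo_density
        C3_onD[OF C3] unstable_modeD(1)[OF C3 um]) (use unstable_modeD(3)[OF C3 um] in auto)
  have "s * (LINT y:A|lborel. Fk k y) \<le> - (s * (LINT y:N|lborel. Fk k y))" for k
  proof -
    have "(LINT y:A|lborel. s * Fk k y) \<le> (LINT y:P|lborel. s * Fk k y)"
      by (rule set_integral_le_if_nonneg_on_Diff[OF set_integrable_subset[OF intFk borel(3) sub(2)]
            borel(3,1) sub(1)])
        (auto simp: Fk_def P_def N_def s_def intro!: kuo_density_sign[OF KK])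
    moreover have "(LINT y:{y1..y2}|lborel. Fk k y) = 0"
      using unstable_modeD(2)[OF C3 um] by (simp add: Fk_def)
    moreover have "(LINT y:{y1..y2}|lborel. s * Fk k y) =
        (LINT y:N|lborel. s * Fk k y) + (LINT y:P|lborel. s * Fk k y)"
      unfolding P_def by (rule set_integral_Diff_split[OF intFk _ borel(2) N(2)]) simp
    ultimately show ?thesis by simp
  qed
  then show ?thesis
    using LIMSEQ_le[OF tendsto[OF A(1) sub(3) A(3)] tendsto_minus[OF tendsto[OF N]]] unfolding s_def
    by blast
qed simp

text \<open>With \<open>s = c - U\<^sub>\<beta>\<close>, the weight \<open>s (\<beta> - U'') = s K (U - U\<^sub>\<beta>)\<close> is nonnegative on
  \<open>P = {s (U - U\<^sub>\<beta>) > 0}\<close>, which contains the critical layer \<open>U = c\<close>, while its compact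
  complement avoids it. There the integrals of the unstable modes converge; \<open>P\<close> is exhausted by
  compact sets away from \<open>U = c\<close>, so the vanishing of \<open>s \<integral> kuo_density\<close> for the unstable modes
  survives as an inequality. That \<open>c\<close> be a singular value is not needed.\<close>
lemma neutral_limiting_kuo_integral_sign:
  fixes U U1 U2 U3 K :: "real \<Rightarrow> real" and \<phi> :: "real \<Rightarrow> complex"
  assumes C3: "C3_on y1 y2 U U1 U2 U3" and KK: "Kuo_K U U2 y1 y2 \<beta> Ub K"
    and c\<phi>: "continuous_on {y1..y2} \<phi>" and NL: "neutral_limiting_mode U U2 y1 y2 c \<alpha> \<beta> \<phi>"
  shows "(Re c - Ub) * (LINT y:{y1..y2}|lborel. kuo_density U U2 \<beta> c \<phi> y) \<le> 0"
proof -
  define s where "s = Re c - Ub"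
  define F where "F = kuo_density U U2 \<beta> c \<phi>"
  show ?thesis
  proof (cases "set_integrable lborel {y1..y2} F")
    case False
    then have "(LINT y:{y1..y2}|lborel. F y) = 0"
      unfolding set_lebesgue_integral_def set_integrable_def by (rule not_integrable_integral_eq)
    then show ?thesis by (simp add: F_def)
  next
    case intF: True
    have critical: "of_real (U y) = c \<longleftrightarrow> U y - Ub - s = 0" for y
      using neutral_limiting_modeE[OF NL] by (auto simp: s_def complex_eq_iff)
    define N where "N = {y\<in>{y1..y2}. s * (U y - Ub) \<le> 0}"
    define P where "P = {y1..y2} - N"
    define A where "A n = {y \<in> {y\<in>{y1..y2}. 1 / (real n + 1) \<le> \<bar>U y - Ub - s\<bar>}.
                           1 / (real n + 1) \<le> s * (U y - Ub)}" for n
    have cU: "continuous_on {y1..y2} (\<lambda>y. U y - Ub - s)" "continuous_on {y1..y2} (\<lambda>y. s * (U y - Ub))"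
      by (intro continuous_intros C3_onD[OF C3])+
    note A = compact_exhaustion_Icc[OF cU, folded A_def]
    have AP: "A n \<subseteq> {y\<in>{y1..y2}. 0 < s * (U y - Ub)}" "\<forall>y\<in>A n. of_real (U y) \<noteq> c" for n
      using A(2)[of n] by (auto simp: critical)
    have "closed N" unfolding N_def by (intro continuous_on_closed_Collect_le continuous_intros C3_onD[OF C3])
    then have borel: "N \<in> sets lborel" "P \<in> sets lborel" "A n \<in> sets lborel" for n
      using compact_imp_closed[OF A(1)[of n]] by (simp_all add: P_def borel_closed sets.Diff)
    have "(LINT y:P|lborel. s * F y) \<le> - (s * (LINT y:N|lborel. F y))"
    proof (rule set_integral_le_if_inner_approx[OF _ borel(2,3)])
      show "set_integrable lborel P (\<lambda>y. s * F y)"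
        by (intro set_integrable_mult_right set_integrable_subset[OF intF borel(2)]) (auto simp: P_def)
      show "A n \<subseteq> P" for n using AP(1)[of n] by (auto simp: P_def N_def)
      show "(LINT y:A n|lborel. s * F y) \<le> - (s * (LINT y:N|lborel. F y))" for n
        using neutral_limiting_kuo_integral_compact_bound[OF C3 KK c\<phi> NL A(1) AP[unfolded s_def]]
        by (simp add: s_def F_def N_def)
      show "eventually (\<lambda>n. y \<in> A n) sequentially" if "y \<in> P" "s * F y \<noteq> 0" for y
        using that by (intro A(3)) (auto simp: P_def N_def F_def kuo_density_def critical)
    qed
    then have "s * (LINT y:P|lborel. F y) \<le> - (s * (LINT y:N|lborel. F y))" by simp
    moreover have "(LINT y:{y1..y2}|lborel. F y) = (LINT y:N|lborel. F y) + (LINT y:P|lborel. F y)"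
      unfolding P_def by (rule set_integral_Diff_split[OF intF]) (use borel in \<open>auto simp: N_def\<close>)
    ultimately have "s * (LINT y:{y1..y2}|lborel. F y) \<le> 0" by (simp add: distrib_left)
    then show ?thesis by (simp add: s_def F_def)
  qed
qed

theorem lemma3p2:
  fixes U U1 U2 U3 K :: "real \<Rightarrow> real" and y1 y2 \<beta> Ub \<alpha> :: real and c :: complex
    and \<phi> \<phi>1 \<phi>2 :: "real \<Rightarrow> complex"
  assumes "C3_on y1 y2 U U1 U2 U3"
    and "\<exists>y\<in>{y1..y2}. U y \<noteq> U y1"
    and "classKplus U U2 y1 y2"
    and "(INF y\<in>{y1..y2}. U2 y) < \<beta>" and "\<beta> < (SUP y\<in>{y1..y2}. U2 y)"
    and "Kuo_K U U2 y1 y2 \<beta> Ub K"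
    and "0 < \<alpha>"
    and "rk_solution U U2 y1 y2 c \<alpha> \<beta> \<phi> \<phi>1 \<phi>2"
  shows "L_form y1 y2 K \<alpha> (vorticity \<alpha> \<phi> \<phi>2) =
           (c - of_real Ub) *
           (LINT y:{y1..y2}|lborel. of_real ((\<beta> - U2 y) / (cmod (of_real (U y) - c))\<^sup>2 * (cmod (\<phi> y))\<^sup>2))
    \<and> (0 < Im c \<longrightarrow> L_form y1 y2 K \<alpha> (vorticity \<alpha> \<phi> \<phi>2) = 0)
    \<and> (neutral_limiting_mode U U2 y1 y2 c \<alpha> \<beta> \<phi> \<and> (regular_mode c Ub \<or> nonresonant_mode U y1 y2 c)
         \<longrightarrow> L_form y1 y2 K \<alpha> (vorticity \<alpha> \<phi> \<phi>2) = 0)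
    \<and> (neutral_limiting_mode U U2 y1 y2 c \<alpha> \<beta> \<phi> \<and> singular_mode U U1 y1 y2 c
         \<longrightarrow> L_form y1 y2 K \<alpha> (vorticity \<alpha> \<phi> \<phi>2) \<in> \<real> \<and> Re (L_form y1 y2 K \<alpha> (vorticity \<alpha> \<phi> \<phi>2)) \<le> 0)"
proof -
  define I where "I = (LINT y:{y1..y2}|lborel. kuo_density U U2 \<beta> c \<phi> y)"
  have L: "L_form y1 y2 K \<alpha> (vorticity \<alpha> \<phi> \<phi>2) = (c - of_real Ub) * of_real I"
    unfolding I_def by (rule L_form_vorticity_eq[OF assms(1,2,6,7,8)])
  have c\<phi>: "continuous_on {y1..y2} \<phi>"
    by (rule H2_on_regularity(4)[OF rk_solutionD(1)[OF assms(8)]])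
  have neutral: "Im c = 0 \<and> L_form y1 y2 K \<alpha> (vorticity \<alpha> \<phi> \<phi>2) = of_real ((Re c - Ub) * I)"
    if "neutral_limiting_mode U U2 y1 y2 c \<alpha> \<beta> \<phi>"
    using that L by (auto simp: neutral_limiting_mode_def complex_eq_iff)
  show ?thesis
  proof (intro conjI impI)
    show "L_form y1 y2 K \<alpha> (vorticity \<alpha> \<phi> \<phi>2) = (c - of_real Ub) *
        (LINT y:{y1..y2}|lborel. of_real ((\<beta> - U2 y) / (cmod (of_real (U y) - c))\<^sup>2 * (cmod (\<phi> y))\<^sup>2))"
      unfolding set_integral_complex_of_real using L by (simp only: I_def kuo_density_def)
    show "L_form y1 y2 K \<alpha> (vorticity \<alpha> \<phi> \<phi>2) = 0" if "0 < Im c"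
      using L kuo_integral_zero_if_Im_nonzero[OF assms(1,8)] that by (simp add: I_def)
    show "L_form y1 y2 K \<alpha> (vorticity \<alpha> \<phi> \<phi>2) = 0"
      if "neutral_limiting_mode U U2 y1 y2 c \<alpha> \<beta> \<phi> \<and> (regular_mode c Ub \<or> nonresonant_mode U y1 y2 c)"
      using that L neutral_nonresonant_kuo_integral_zero[OF assms(1) c\<phi>]
      by (auto simp: regular_mode_def I_def)
    assume "neutral_limiting_mode U U2 y1 y2 c \<alpha> \<beta> \<phi> \<and> singular_mode U U1 y1 y2 c"
    then show "L_form y1 y2 K \<alpha> (vorticity \<alpha> \<phi> \<phi>2) \<in> \<real>"
      "Re (L_form y1 y2 K \<alpha> (vorticity \<alpha> \<phi> \<phi>2)) \<le> 0"
      using neutral neutral_limiting_kuo_integral_sign[OF assms(1,6) c\<phi>] by (auto simp: I_def)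
  qed
qed

end
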